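(* Let $b,c>0$ and let $x_1,x_2,\dots\in\mathbb{R}^d$ satisfy $\|x_t\|^2\le X^2$ for all $t$. Define $D_1=bI+x_1x_1^\top$ and $D_t=\big(D_{t-1}^{-1}+c^{-1}I\big)^{-1}+x_tx_t^\top$ for $t\ge2$. Then for every $t\ge1$ all eigenvalues of $D_t$ satisfy \[ \max_i\lambda_i(D_t)\le\max\Big\{\frac{3X^2+\sqrt{X^4+4X^2c}}{2},\ b+X^2\Big\}. \] *)

theory Defs
  imports "HOL-Analysis.Analysis"
begin

text \<open>Real eigenvalue of a square real matrix (all eigenvalues of the symmetric
  matrices considered here are real).\<close>
definition is_eigenvalue :: "real^'n^'n \<Rightarrow> real \<Rightarrow> bool" where
  "is_eigenvalue A l \<longleftrightarrow> (\<exists>v. v \<noteq> 0 \<and> A *v v = l *\<^sub>R v)"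

definition outer :: "real^'n \<Rightarrow> real^'n^'n" where
  "outer x = (\<chi> i j. x $ i * x $ j)"

text \<open>The sequence D_t, indexed from t = 1 (the value at 0 is irrelevant).\<close>
fun Dseq :: "real \<Rightarrow> real \<Rightarrow> (nat \<Rightarrow> real^'n) \<Rightarrow> nat \<Rightarrow> real^'n^'n" where
  "Dseq b c x 0 = mat 0"
| "Dseq b c x (Suc 0) = mat b + outer (x 1)"
| "Dseq b c x (Suc (Suc t)) =
     matrix_inv (matrix_inv (Dseq b c x (Suc t)) + mat (1 / c)) + outer (x (Suc (Suc t)))"

end

theory Submission
  imports Defs
begin

text \<open>
  By induction, every \<open>D\<^sub>t\<close> is symmetric positive definite with quadratic form bounded by
  \<open>M\<parallel>v\<parallel>\<^sup>2\<close>, where \<open>M\<close> is the right-hand side of the theorem. For the step, a form bound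
  \<open>D \<le> M I\<close> inverts to \<open>D\<^sup>-\<^sup>1 \<ge> M\<^sup>-\<^sup>1 I\<close>, so \<open>D\<^sup>-\<^sup>1 + c\<^sup>-\<^sup>1 I \<ge> (M\<^sup>-\<^sup>1 + c\<^sup>-\<^sup>1) I\<close>, which inverts back to
  \<open>(D\<^sup>-\<^sup>1 + c\<^sup>-\<^sup>1 I)\<^sup>-\<^sup>1 \<le> Mc/(M + c) I\<close>; adding \<open>x x\<^sup>T \<le> X\<^sup>2 I\<close> gives \<open>D\<^sub>t\<^sub>+\<^sub>1 \<le> (Mc/(M + c) + X\<^sup>2) I\<close>.
  Finally \<open>Mc/(M + c) + X\<^sup>2 \<le> M\<close> holds as soon as \<open>M\<close> is at least the positive root
  \<open>(X\<^sup>2 + \<surd>(X\<^sup>4 + 4X\<^sup>2c))/2\<close> of \<open>\<lambda>\<^sup>2 - X\<^sup>2\<lambda> - X\<^sup>2c\<close>, and the base case needs \<open>M \<ge> b + X\<^sup>2\<close>.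
\<close>

lemma mat_mult_vector: "mat k *v (v::real^'n) = k *\<^sub>R v"
proof -
  have "mat k *v v = matrix ((*\<^sub>R) k) *v v" by (simp add: matrix_scaleR)
  also have "\<dots> = k *\<^sub>R v" by (simp add: matrix_works)
  finally show ?thesis .
qed

lemma outer_mult_vector: "outer x *v (v::real^'n) = (x \<bullet> v) *\<^sub>R x"
  by (simp add: vec_eq_iff matrix_vector_mult_def outer_def inner_vec_def sum_distrib_left mult_ac)

lemma inner_outer_mult_vector: "v \<bullet> (outer x *v v) = (x \<bullet> v)\<^sup>2"
  by (simp add: outer_mult_vector power2_eq_square inner_commute)

lemma inner_outer_mult_vector_le:
  assumes "norm x ^ 2 \<le> X ^ 2"
  shows "v \<bullet> (outer x *v v) \<le> X\<^sup>2 * (v \<bullet> v)"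
proof -
  have "(x \<bullet> v)\<^sup>2 \<le> (norm x * norm v)\<^sup>2"
    using power_mono[OF Cauchy_Schwarz_ineq2[of x v] abs_ge_zero, of 2] by simp
  also have "\<dots> = norm x ^ 2 * (v \<bullet> v)" by (simp add: power_mult_distrib power2_norm_eq_inner)
  also have "\<dots> \<le> X\<^sup>2 * (v \<bullet> v)" using assms by (simp add: mult_right_mono)
  finally show ?thesis by (simp add: inner_outer_mult_vector)
qed

lemma matrix_inv_mult_vector:
  fixes A :: "real^'n^'n"
  assumes "invertible A"
  shows "A *v (matrix_inv A *v v) = v" "matrix_inv A *v (A *v v) = v"
proof -
  have "A ** matrix_inv A = mat 1 \<and> matrix_inv A ** A = mat 1"
    using assms unfolding invertible_def matrix_inv_def by (rule someI_ex)
  then show "A *v (matrix_inv A *v v) = v" "matrix_inv A *v (A *v v) = v"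
    by (simp_all add: matrix_vector_mul_assoc)
qed

definition symmetric_matrix :: "real^'n^'n \<Rightarrow> bool" where
  "symmetric_matrix A \<longleftrightarrow> (\<forall>u w. u \<bullet> (A *v w) = (A *v u) \<bullet> w)"

definition pos_def_matrix :: "real^'n^'n \<Rightarrow> bool" where
  "pos_def_matrix A \<longleftrightarrow> (\<forall>v. v \<noteq> 0 \<longrightarrow> v \<bullet> (A *v v) > 0)"

lemma symmetric_matrix_mat: "symmetric_matrix (mat k)"
  by (simp add: symmetric_matrix_def mat_mult_vector)

lemma symmetric_matrix_outer: "symmetric_matrix (outer x)"
  by (simp add: symmetric_matrix_def outer_mult_vector inner_commute)

lemma symmetric_matrix_add:
  "symmetric_matrix A \<Longrightarrow> symmetric_matrix B \<Longrightarrow> symmetric_matrix (A + B)"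
  by (simp add: symmetric_matrix_def matrix_vector_mult_add_rdistrib inner_add_left inner_add_right)

lemma symmetric_matrix_inv:
  fixes A :: "real^'n^'n"
  assumes "symmetric_matrix A" "invertible A"
  shows "symmetric_matrix (matrix_inv A)"
  unfolding symmetric_matrix_def
proof (intro allI)
  fix u w
  define p where "p = matrix_inv A *v u"
  define q where "q = matrix_inv A *v w"
  have u: "u = A *v p" and w: "w = A *v q"
    using matrix_inv_mult_vector[OF assms(2)] by (simp_all add: p_def q_def)
  show "u \<bullet> (matrix_inv A *v w) = (matrix_inv A *v u) \<bullet> w"
    using assms(1) unfolding symmetric_matrix_def u w matrix_inv_mult_vector[OF assms(2)] by simp
qed

lemma pos_def_matrix_nonneg: "pos_def_matrix A \<Longrightarrow> v \<bullet> (A *v v) \<ge> 0"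
  unfolding pos_def_matrix_def by (cases "v = 0") (auto intro: less_imp_le)

lemma pos_def_matrix_invertible:
  fixes A :: "real^'n^'n"
  assumes "pos_def_matrix A"
  shows "invertible A"
proof -
  have "\<forall>x. A *v x = 0 \<longrightarrow> x = 0"
    using assms unfolding pos_def_matrix_def by (metis inner_zero_right less_irrefl)
  then show ?thesis
    by (simp add: invertible_left_inverse matrix_left_invertible_ker)
qed

lemma pos_def_matrix_inv:
  fixes A :: "real^'n^'n"
  assumes "pos_def_matrix A"
  shows "pos_def_matrix (matrix_inv A)"
  unfolding pos_def_matrix_def
proof (intro allI impI)
  fix v :: "real^'n"
  assume "v \<noteq> 0"
  define w where "w = matrix_inv A *v v"
  have v: "v = A *v w"
    using matrix_inv_mult_vector[OF pos_def_matrix_invertible[OF assms]] by (simp add: w_def)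
  with \<open>v \<noteq> 0\<close> have "w \<noteq> 0" by auto
  then have "w \<bullet> (A *v w) > 0" using assms unfolding pos_def_matrix_def by blast
  moreover have "v \<bullet> (matrix_inv A *v v) = w \<bullet> (A *v w)"
    unfolding w_def[symmetric] using v inner_commute by metis
  ultimately show "v \<bullet> (matrix_inv A *v v) > 0" by simp
qed

lemma pos_def_matrix_Cauchy_Schwarz:
  fixes D :: "real^'n^'n"
  assumes "symmetric_matrix D" "pos_def_matrix D"
  shows "(v \<bullet> (D *v w))\<^sup>2 \<le> (v \<bullet> (D *v v)) * (w \<bullet> (D *v w))"
proof (cases "w = 0")
  case True
  then show ?thesis by simp
next
  case False
  define a where "a = v \<bullet> (D *v v)"
  define b where "b = v \<bullet> (D *v w)"
  define c where "c = w \<bullet> (D *v w)"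
  have "c > 0" using assms(2) False unfolding pos_def_matrix_def c_def by auto
  define s where "s = b / c"
  have "0 \<le> (v - s *\<^sub>R w) \<bullet> (D *v (v - s *\<^sub>R w))" by (rule pos_def_matrix_nonneg[OF assms(2)])
  also have "\<dots> = a - 2 * s * b + s\<^sup>2 * c"
  proof -
    have "w \<bullet> (D *v v) = b" using assms(1) unfolding symmetric_matrix_def b_def by (metis inner_commute)
    then show ?thesis
      by (simp add: matrix_scaleR_vector_ac[symmetric] a_def b_def c_def algebra_simps power2_eq_square)
  qed
  also have "\<dots> = a - b\<^sup>2 / c" using \<open>c > 0\<close> by (simp add: s_def field_simps power2_eq_square)
  finally have "b\<^sup>2 / c \<le> a" by simp
  then show ?thesis using \<open>c > 0\<close> by (simp add: a_def b_def c_def field_simps)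
qed

lemma matrix_inv_form_lower_bound:
  fixes D :: "real^'n^'n"
  assumes "symmetric_matrix D" "pos_def_matrix D" "\<And>v. v \<bullet> (D *v v) \<le> M * (v \<bullet> v)"
  shows "v \<bullet> v \<le> M * (v \<bullet> (matrix_inv D *v v))"
proof (cases "v = 0")
  case True
  then show ?thesis by simp
next
  case False
  define w where "w = matrix_inv D *v v"
  have Dw: "D *v w = v"
    using matrix_inv_mult_vector[OF pos_def_matrix_invertible[OF assms(2)]] by (simp add: w_def)
  have "w \<bullet> v > 0" using pos_def_matrix_inv[OF assms(2)] False
    unfolding pos_def_matrix_def w_def by (simp add: inner_commute)
  have "(v \<bullet> v)\<^sup>2 \<le> (v \<bullet> (D *v v)) * (w \<bullet> v)"
    using pos_def_matrix_Cauchy_Schwarz[OF assms(1,2), of v w] by (simp add: Dw)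
  also have "\<dots> \<le> M * (v \<bullet> v) * (w \<bullet> v)"
    using assms(3)[of v] \<open>w \<bullet> v > 0\<close> by (simp add: mult_right_mono)
  finally have "v \<bullet> v \<le> M * (w \<bullet> v)"
    using False by (simp add: power2_eq_square mult.assoc)
  then show ?thesis by (simp add: w_def inner_commute)
qed

lemma coercive_imp_pos_def_matrix:
  fixes A :: "real^'n^'n"
  assumes "\<And>v. \<alpha> * (v \<bullet> v) \<le> v \<bullet> (A *v v)" "\<alpha> > 0"
  shows "pos_def_matrix A"
  unfolding pos_def_matrix_def
proof (intro allI impI)
  fix v :: "real^'n"
  assume "v \<noteq> 0"
  then have "0 < \<alpha> * (v \<bullet> v)" using \<open>\<alpha> > 0\<close> by simp
  then show "0 < v \<bullet> (A *v v)" using assms(1)[of v] by linarith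
qed

lemma coercive_matrix_inv_form_upper_bound:
  fixes A :: "real^'n^'n"
  assumes coercive: "\<And>v. \<alpha> * (v \<bullet> v) \<le> v \<bullet> (A *v v)" and "\<alpha> > 0"
  shows "\<alpha> * (v \<bullet> (matrix_inv A *v v)) \<le> v \<bullet> v"
proof -
  have "pos_def_matrix A" using coercive \<open>\<alpha> > 0\<close> by (rule coercive_imp_pos_def_matrix)
  define w where "w = matrix_inv A *v v"
  have Aw: "A *v w = v"
    using matrix_inv_mult_vector[OF pos_def_matrix_invertible[OF \<open>pos_def_matrix A\<close>]] by (simp add: w_def)
  have w_le: "\<alpha> * (norm w)\<^sup>2 \<le> v \<bullet> w"
    using coercive[of w] by (simp add: Aw power2_norm_eq_inner inner_commute)
  have vw: "v \<bullet> w \<le> norm v * norm w" by (rule norm_cauchy_schwarz)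
  have "\<alpha> * norm w \<le> norm v"
  proof (cases "w = 0")
    case True
    then show ?thesis by simp
  next
    case False
    have "(\<alpha> * norm w) * norm w \<le> norm v * norm w"
      using w_le vw by (simp add: power2_eq_square mult_ac)
    then show ?thesis using False by simp
  qed
  have "\<alpha> * (v \<bullet> w) \<le> \<alpha> * (norm v * norm w)" using vw \<open>\<alpha> > 0\<close> by simp
  also have "\<dots> = norm v * (\<alpha> * norm w)" by simp
  also have "\<dots> \<le> norm v * norm v" using \<open>\<alpha> * norm w \<le> norm v\<close> by (simp add: mult_left_mono)
  finally show ?thesis by (simp add: w_def power2_norm_eq_inner[symmetric] power2_eq_square)
qed

lemma parallel_sum_add_le:
  fixes M X c :: real
  assumes "c > 0" "M > 0" "M \<ge> (X\<^sup>2 + sqrt (X^4 + 4 * X\<^sup>2 * c)) / 2"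
  shows "M * c / (M + c) + X\<^sup>2 \<le> M"
proof -
  define s where "s = sqrt (X^4 + 4 * X\<^sup>2 * c)"
  have "0 \<le> 4 * X\<^sup>2 * c" using \<open>c > 0\<close> by simp
  then have s2: "s\<^sup>2 = (X\<^sup>2)\<^sup>2 + 4 * X\<^sup>2 * c" unfolding s_def by simp
  have "X\<^sup>2 \<le> s"
    using \<open>0 \<le> 4 * X\<^sup>2 * c\<close> unfolding s_def by (simp add: real_le_rsqrt)
  have "(M - (X\<^sup>2 + s) / 2) * (M - (X\<^sup>2 - s) / 2) = M\<^sup>2 - X\<^sup>2 * M + ((X\<^sup>2)\<^sup>2 - s\<^sup>2) / 4"
    by (simp add: field_simps power2_eq_square)
  then have "M\<^sup>2 - X\<^sup>2 * M - X\<^sup>2 * c = (M - (X\<^sup>2 + s) / 2) * (M - (X\<^sup>2 - s) / 2)"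
    by (simp add: s2)
  also have "\<dots> \<ge> 0"
    using assms(2,3) \<open>X\<^sup>2 \<le> s\<close> unfolding s_def[symmetric]
    by (intro mult_nonneg_nonneg) (simp_all add: field_simps)
  finally have "M * c \<le> (M - X\<^sup>2) * (M + c)" by (simp add: algebra_simps power2_eq_square)
  then have "M * c / (M + c) \<le> M - X\<^sup>2" using assms(1,2) by (simp add: pos_divide_le_eq)
  then show ?thesis by simp
qed

definition pos_def_bounded :: "real \<Rightarrow> real^'n^'n \<Rightarrow> bool" where
  "pos_def_bounded M D \<longleftrightarrow>
     symmetric_matrix D \<and> pos_def_matrix D \<and> (\<forall>v. v \<bullet> (D *v v) \<le> M * (v \<bullet> v))"

lemma pos_def_bounded_mat: "b > 0 \<Longrightarrow> pos_def_bounded b (mat b)"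
  by (simp add: pos_def_bounded_def pos_def_matrix_def symmetric_matrix_mat mat_mult_vector)

lemma pos_def_bounded_mono: "pos_def_bounded K D \<Longrightarrow> K \<le> M \<Longrightarrow> pos_def_bounded M D"
  unfolding pos_def_bounded_def by (meson inner_ge_zero mult_right_mono order_trans)

lemma pos_def_bounded_add_outer:
  assumes "pos_def_bounded K D" "norm y ^ 2 \<le> X ^ 2"
  shows "pos_def_bounded (K + X\<^sup>2) (D + outer y)"
proof -
  have form: "v \<bullet> ((D + outer y) *v v) = v \<bullet> (D *v v) + (y \<bullet> v)\<^sup>2" for v
    by (simp add: matrix_vector_mult_add_rdistrib inner_add_right inner_outer_mult_vector)
  have "v \<bullet> (D *v v) + (y \<bullet> v)\<^sup>2 \<le> (K + X\<^sup>2) * (v \<bullet> v)" for v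
    using assms(1) inner_outer_mult_vector_le[OF assms(2), of v]
    unfolding pos_def_bounded_def inner_outer_mult_vector by (simp add: distrib_right add_mono)
  with assms(1) show ?thesis
    unfolding pos_def_bounded_def pos_def_matrix_def form
    by (auto intro: add_pos_nonneg symmetric_matrix_add symmetric_matrix_outer)
qed

lemma pos_def_bounded_parallel_sum:
  assumes D: "pos_def_bounded M D" and "M > 0" "c > 0"
  shows "pos_def_bounded (M * c / (M + c)) (matrix_inv (matrix_inv D + mat (1 / c)))"
proof -
  define A where "A = matrix_inv D + mat (1 / c)"
  define \<alpha> where "\<alpha> = 1 / M + 1 / c"
  have "\<alpha> > 0" using \<open>M > 0\<close> \<open>c > 0\<close> by (simp add: \<alpha>_def add_pos_pos)
  have D_sym: "symmetric_matrix D" and D_pd: "pos_def_matrix D"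
    and D_le: "\<And>v. v \<bullet> (D *v v) \<le> M * (v \<bullet> v)"
    using D unfolding pos_def_bounded_def by auto
  have A_coercive: "\<alpha> * (v \<bullet> v) \<le> v \<bullet> (A *v v)" for v
  proof -
    have "(1 / M) * (v \<bullet> v) \<le> v \<bullet> (matrix_inv D *v v)"
      using matrix_inv_form_lower_bound[OF D_sym D_pd D_le, of v] \<open>M > 0\<close> by (simp add: field_simps)
    then show ?thesis
      by (simp add: A_def \<alpha>_def matrix_vector_mult_add_rdistrib inner_add_right mat_mult_vector distrib_right)
  qed
  have A_pd: "pos_def_matrix A" using A_coercive \<open>\<alpha> > 0\<close> by (rule coercive_imp_pos_def_matrix)
  have "symmetric_matrix A"
    unfolding A_def
    by (intro symmetric_matrix_add symmetric_matrix_inv D_sym pos_def_matrix_invertible D_pd symmetric_matrix_mat)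
  moreover have "v \<bullet> (matrix_inv A *v v) \<le> M * c / (M + c) * (v \<bullet> v)" for v
  proof -
    have "v \<bullet> (matrix_inv A *v v) \<le> (1 / \<alpha>) * (v \<bullet> v)"
      using coercive_matrix_inv_form_upper_bound[OF A_coercive \<open>\<alpha> > 0\<close>, of v] \<open>\<alpha> > 0\<close>
      by (simp add: field_simps)
    also have "1 / \<alpha> = M * c / (M + c)"
      using \<open>M > 0\<close> \<open>c > 0\<close> by (simp add: \<alpha>_def field_simps)
    finally show ?thesis .
  qed
  ultimately show ?thesis
    unfolding A_def[symmetric] pos_def_bounded_def
    using symmetric_matrix_inv pos_def_matrix_invertible[OF A_pd] pos_def_matrix_inv[OF A_pd] by blast
qed

lemma is_eigenvalue_le:
  assumes "is_eigenvalue D l" "\<And>v. v \<bullet> (D *v v) \<le> M * (v \<bullet> v)"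
  shows "l \<le> M"
proof -
  obtain v where "v \<noteq> 0" "D *v v = l *\<^sub>R v"
    using assms(1) unfolding is_eigenvalue_def by blast
  then have "l * (v \<bullet> v) \<le> M * (v \<bullet> v)" using assms(2)[of v] by simp
  then show ?thesis using \<open>v \<noteq> 0\<close> by simp
qed

theorem lemma7:
  fixes b c X :: real and x :: "nat \<Rightarrow> real^'n"
  assumes "b > 0" and "c > 0"
    and "\<And>t. t \<ge> 1 \<Longrightarrow> norm (x t) ^ 2 \<le> X ^ 2"
  shows "\<And>t l. t \<ge> 1 \<Longrightarrow> is_eigenvalue (Dseq b c x t) l \<Longrightarrow>
           l \<le> max ((3 * X^2 + sqrt (X^4 + 4 * X^2 * c)) / 2) (b + X^2)"
proof -
  let ?M = "max ((3 * X^2 + sqrt (X^4 + 4 * X^2 * c)) / 2) (b + X^2)"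
  have "b + X\<^sup>2 \<le> ?M" by simp
  then have "?M > 0" using \<open>b > 0\<close> by (smt (verit) zero_le_power2)
  have M_root: "(X\<^sup>2 + sqrt (X^4 + 4 * X\<^sup>2 * c)) / 2 \<le> ?M"
    by (rule order_trans[OF _ max.cobounded1]) simp
  have x_bound: "norm (x (Suc t)) ^ 2 \<le> X ^ 2" for t using assms(3) by simp
  have bounded: "pos_def_bounded ?M (Dseq b c x (Suc t))" for t
  proof (induction t)
    case 0
    have "pos_def_bounded (b + X\<^sup>2) (Dseq b c x (Suc 0))"
      using pos_def_bounded_add_outer[OF pos_def_bounded_mat[OF \<open>b > 0\<close>] x_bound[of 0]] by simp
    then show ?case using \<open>b + X\<^sup>2 \<le> ?M\<close> by (rule pos_def_bounded_mono)
  next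
    case (Suc t)
    have "pos_def_bounded (?M * c / (?M + c) + X\<^sup>2) (Dseq b c x (Suc (Suc t)))"
      using pos_def_bounded_add_outer[OF pos_def_bounded_parallel_sum[OF Suc \<open>?M > 0\<close> \<open>c > 0\<close>] x_bound]
      by simp
    then show ?case using parallel_sum_add_le[OF \<open>c > 0\<close> \<open>?M > 0\<close> M_root] by (rule pos_def_bounded_mono)
  qed
  show "l \<le> ?M" if "t \<ge> 1" "is_eigenvalue (Dseq b c x t) l" for t l
  proof -
    obtain t' where "t = Suc t'" using \<open>t \<ge> 1\<close> by (cases t) auto
    then show ?thesis
      using is_eigenvalue_le[OF that(2)] bounded[of t'] unfolding pos_def_bounded_def by blast
  qed
qed

end
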